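(* Let $T\in\mathbb{R}^{m\times m}$ be symmetric with eigendecomposition $T=Q\Lambda Q^\top$, $\Lambda=\operatorname{diag}(\lambda_1,\ldots,\lambda_m)$, let $f$ be continuously differentiable on an open interval containing the $\lambda_i$, let $u\in\mathbb{R}^n$ be nonzero, $c=Q^\top e_1$, $F$ the divided-difference matrix with $F_{ij}=\frac{f(\lambda_i)-f(\lambda_j)}{\lambda_i-\lambda_j}$ if $\lambda_i\neq\lambda_j$ and $F_{ij}=f'(\lambda_i)$ otherwise, and $G=\|u\|^2Q((cc^\top)\circ F)Q^\top$. If $S\in\mathbb{R}^{m\times m}$ satisfies $S^\top=-S$ and $Se_1=0$, then $\operatorname{tr}(G^\top[T,S])=0$, where $[T,S]=TS-ST$.
   Context: $\circ$ denotes the Hadamard product and $e_1$ the first standard basis vector of $\mathbb{R}^m$. *)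

theory Defs
  imports Complex_Main "Jordan_Normal_Form.Matrix"
begin

definition mat_trace :: "'a::comm_ring_1 mat \<Rightarrow> 'a" where
  "mat_trace A = (\<Sum>i<dim_row A. A $$ (i, i))"

definition hadamard :: "'a::times mat \<Rightarrow> 'a mat \<Rightarrow> 'a mat" where
  "hadamard A B = mat (dim_row A) (dim_col A) (\<lambda>(i, j). A $$ (i, j) * B $$ (i, j))"

definition outer_prod :: "'a::times vec \<Rightarrow> 'a vec \<Rightarrow> 'a mat" where
  "outer_prod x y = mat (dim_vec x) (dim_vec y) (\<lambda>(i, j). x $ i * y $ j)"

definition divided_diff_mat :: "nat \<Rightarrow> (real \<Rightarrow> real) \<Rightarrow> (real \<Rightarrow> real) \<Rightarrow> (nat \<Rightarrow> real) \<Rightarrow> real mat" where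
  "divided_diff_mat m f f' lam = mat m m (\<lambda>(i, j).
     if lam i \<noteq> lam j then (f (lam i) - f (lam j)) / (lam i - lam j) else f' (lam i))"

end

theory Submission
  imports Defs
begin

(* Write G = |u|^2 Q H Q^T with H = (c c^T) o F. Since H is symmetric, so is G, and cyclicity of
   the trace gives tr(G [T,S]) = tr([G,T] S). In the eigenbasis the divided differences only enter
   through F_ij (lam_i - lam_j) = f(lam_i) - f(lam_j), which also holds when lam_i = lam_j; hence
   [H,Lambda] = c w^T - w c^T with w_i = c_i f(lam_i), and since Q c = e_1,
   [G,T] = |u|^2 (e_1 v^T - v e_1^T) with v = Q w. For skew S with S e_1 = 0 both
   tr(e_1 v^T S) = v . S e_1 and tr(v e_1^T S) = e_1 . S v = -(S e_1) . v vanish.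
   Neither the derivative values on the diagonal of F nor any smoothness of f is needed. *)

lemma outer_prod_carrier_mat[simp]:
  "x \<in> carrier_vec n \<Longrightarrow> y \<in> carrier_vec k \<Longrightarrow> outer_prod x y \<in> carrier_mat n k"
  by (simp add: outer_prod_def)

lemma hadamard_carrier_mat[simp]: "A \<in> carrier_mat n k \<Longrightarrow> hadamard A B \<in> carrier_mat n k"
  by (simp add: hadamard_def)

lemma mat_trace_mult_comm:
  fixes A B :: "'a::comm_ring_1 mat"
  assumes "A \<in> carrier_mat n k" "B \<in> carrier_mat k n"
  shows "mat_trace (A * B) = mat_trace (B * A)"
proof -
  have "mat_trace (A * B) = (\<Sum>i<n. \<Sum>j<k. A $$ (i,j) * B $$ (j,i))"
    using assms by (simp add: mat_trace_def scalar_prod_def lessThan_atLeast0)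
  also have "\<dots> = (\<Sum>j<k. \<Sum>i<n. B $$ (j,i) * A $$ (i,j))"
    by (subst sum.swap) (simp add: mult.commute)
  also have "\<dots> = mat_trace (B * A)"
    using assms by (simp add: mat_trace_def scalar_prod_def lessThan_atLeast0)
  finally show ?thesis .
qed

lemma mat_trace_minus:
  fixes A B :: "'a::comm_ring_1 mat"
  assumes "A \<in> carrier_mat n n" "B \<in> carrier_mat n n"
  shows "mat_trace (A - B) = mat_trace A - mat_trace B"
  using assms by (simp add: mat_trace_def sum_subtractf)

lemma mat_trace_smult:
  fixes A :: "'a::comm_ring_1 mat"
  assumes "A \<in> carrier_mat n n"
  shows "mat_trace (k \<cdot>\<^sub>m A) = k * mat_trace A"
  using assms by (simp add: mat_trace_def sum_distrib_left)

lemma mat_trace_mult_commutator: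
  fixes A B C :: "'a::comm_ring_1 mat"
  assumes A: "A \<in> carrier_mat n n" and B: "B \<in> carrier_mat n n" and C: "C \<in> carrier_mat n n"
  shows "mat_trace (A * (B * C - C * B)) = mat_trace ((A * B - B * A) * C)"
proof -
  have BC: "B * C \<in> carrier_mat n n" and CB: "C * B \<in> carrier_mat n n"
    and AB: "A * B \<in> carrier_mat n n" and BA: "B * A \<in> carrier_mat n n"
    using A B C by auto
  have "mat_trace (A * (B * C - C * B)) = mat_trace (A * (B * C)) - mat_trace (A * (C * B))"
    using A BC CB by (simp add: mult_minus_distrib_mat[OF A BC CB] mat_trace_minus[of _ n])
  also have "mat_trace (A * (B * C)) = mat_trace ((A * B) * C)"
    using A B C by (simp add: assoc_mult_mat[of _ n n _ n _ n])
  also have "mat_trace (A * (C * B)) = mat_trace ((A * C) * B)"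
    using A B C by (simp add: assoc_mult_mat[of _ n n _ n _ n])
  also have "\<dots> = mat_trace (B * (A * C))"
    using A B C by (intro mat_trace_mult_comm[of _ n n]) auto
  also have "\<dots> = mat_trace ((B * A) * C)"
    using A B C by (simp add: assoc_mult_mat[of _ n n _ n _ n])
  also have "mat_trace ((A * B) * C) - \<dots> = mat_trace ((A * B - B * A) * C)"
    using AB BA C by (simp add: minus_mult_distrib_mat[OF AB BA C] mat_trace_minus[of _ n])
  finally show ?thesis .
qed

lemma mat_trace_outer_prod_mult:
  fixes A :: "'a::comm_ring_1 mat"
  assumes "x \<in> carrier_vec n" "y \<in> carrier_vec n" "A \<in> carrier_mat n n"
  shows "mat_trace (outer_prod x y * A) = y \<bullet> (A *\<^sub>v x)"
proof -
  have "mat_trace (outer_prod x y * A) = (\<Sum>i<n. \<Sum>j<n. x $ i * y $ j * A $$ (j,i))"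
    using assms by (simp add: mat_trace_def scalar_prod_def lessThan_atLeast0 outer_prod_def)
  also have "\<dots> = (\<Sum>j<n. \<Sum>i<n. y $ j * (A $$ (j,i) * x $ i))"
    by (subst sum.swap) (simp add: ac_simps)
  also have "\<dots> = y \<bullet> (A *\<^sub>v x)"
    using assms by (simp add: scalar_prod_def lessThan_atLeast0 sum_distrib_left)
  finally show ?thesis .
qed

lemma mat_trace_outer_prod_diff_skew:
  fixes S :: "'a::comm_ring_1 mat"
  assumes x: "x \<in> carrier_vec n" and y: "y \<in> carrier_vec n"
    and S: "S \<in> carrier_mat n n" and skew: "transpose_mat S = - S"
    and kernel: "S *\<^sub>v x = 0\<^sub>v n"
  shows "mat_trace ((outer_prod x y - outer_prod y x) * S) = 0"
proof -
  have xy: "outer_prod x y \<in> carrier_mat n n" and yx: "outer_prod y x \<in> carrier_mat n n"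
    using x y by simp_all
  have "x \<bullet> (S *\<^sub>v y) = (transpose_mat S *\<^sub>v x) \<bullet> y"
    using transpose_vec_mult_scalar[OF S y x] by simp
  also have "\<dots> = 0"
    unfolding skew using S x y kernel by simp
  finally have "x \<bullet> (S *\<^sub>v y) = 0" .
  moreover have "mat_trace ((outer_prod x y - outer_prod y x) * S) = y \<bullet> (S *\<^sub>v x) - x \<bullet> (S *\<^sub>v y)"
    using mat_trace_minus[OF mult_carrier_mat[OF xy S] mult_carrier_mat[OF yx S]] S x y
    by (simp add: minus_mult_distrib_mat[OF xy yx S] mat_trace_outer_prod_mult[of _ n])
  ultimately show ?thesis
    using y kernel by simp
qed

lemma mult_outer_prod:
  fixes A :: "'a::comm_ring_1 mat"
  assumes "A \<in> carrier_mat nr n" "x \<in> carrier_vec n"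
  shows "A * outer_prod x y = outer_prod (A *\<^sub>v x) y"
  using assms
  by (intro eq_matI) (auto simp: outer_prod_def scalar_prod_def sum_distrib_left ac_simps)

lemma outer_prod_mult:
  fixes B :: "'a::comm_ring_1 mat"
  assumes "B \<in> carrier_mat n nc" "y \<in> carrier_vec n"
  shows "outer_prod x y * B = outer_prod x (transpose_mat B *\<^sub>v y)"
  using assms
  by (intro eq_matI) (auto simp: outer_prod_def scalar_prod_def sum_distrib_left ac_simps)

lemma conjugate_outer_prod_diff:
  fixes Q :: "'a::comm_ring_1 mat"
  assumes Q: "Q \<in> carrier_mat n n" and x: "x \<in> carrier_vec n" and y: "y \<in> carrier_vec n"
  shows "Q * (outer_prod x y - outer_prod y x) * transpose_mat Q
    = outer_prod (Q *\<^sub>v x) (Q *\<^sub>v y) - outer_prod (Q *\<^sub>v y) (Q *\<^sub>v x)"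
proof -
  have xy: "outer_prod x y \<in> carrier_mat n n" and yx: "outer_prod y x \<in> carrier_mat n n"
    using x y by simp_all
  have "Q * (outer_prod x y - outer_prod y x) * transpose_mat Q
      = Q * outer_prod x y * transpose_mat Q - Q * outer_prod y x * transpose_mat Q"
    using Q xy yx by (simp add: mult_minus_distrib_mat[OF Q xy yx] minus_mult_distrib_mat[of _ n n])
  then show ?thesis
    using Q x y by (simp add: mult_outer_prod outer_prod_mult[of _ n n])
qed

lemma transpose_smult_mat: "transpose_mat (k \<cdot>\<^sub>m A) = k \<cdot>\<^sub>m transpose_mat A"
  by (intro eq_matI) auto

lemma transpose_conjugate:
  fixes Q A :: "'a::comm_ring_1 mat"
  assumes "Q \<in> carrier_mat n n" "A \<in> carrier_mat n n"
  shows "transpose_mat (Q * A * transpose_mat Q) = Q * transpose_mat A * transpose_mat Q"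
  using assms by (simp add: transpose_mult[of _ n n _ n] assoc_mult_mat[of _ n n _ n _ n])

lemma commutator_conjugate:
  fixes Q A B :: "'a::comm_ring_1 mat"
  assumes Q: "Q \<in> carrier_mat n n" and orth: "transpose_mat Q * Q = 1\<^sub>m n"
    and A: "A \<in> carrier_mat n n" and B: "B \<in> carrier_mat n n"
  shows "(Q * A * transpose_mat Q) * (Q * B * transpose_mat Q) - (Q * B * transpose_mat Q) * (Q * A * transpose_mat Q)
    = Q * (A * B - B * A) * transpose_mat Q"
proof -
  have cancel: "(Q * X * transpose_mat Q) * (Q * Y * transpose_mat Q) = Q * (X * Y) * transpose_mat Q"
    if "X \<in> carrier_mat n n" "Y \<in> carrier_mat n n" for X Y
  proof -
    have "(Q * X * transpose_mat Q) * (Q * Y * transpose_mat Q) = Q * (X * (transpose_mat Q * Q) * Y) * transpose_mat Q"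
      using Q that by (simp add: assoc_mult_mat[of _ n n _ n _ n])
    then show ?thesis
      using that by (simp add: orth)
  qed
  have AB: "A * B \<in> carrier_mat n n" and BA: "B * A \<in> carrier_mat n n"
    using A B by auto
  have "Q * (A * B - B * A) * transpose_mat Q = Q * (A * B) * transpose_mat Q - Q * (B * A) * transpose_mat Q"
    using Q AB BA by (simp add: mult_minus_distrib_mat[OF Q AB BA] minus_mult_distrib_mat[of _ n n])
  then show ?thesis
    by (simp only: cancel[OF A B] cancel[OF B A])
qed

lemma transpose_hadamard_divided_diff:
  fixes f f' :: "real \<Rightarrow> real" and lam :: "nat \<Rightarrow> real"
  assumes "c \<in> carrier_vec m"
  shows "transpose_mat (hadamard (outer_prod c c) (divided_diff_mat m f f' lam))
    = hadamard (outer_prod c c) (divided_diff_mat m f f' lam)"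
  using assms
  by (intro eq_matI) (auto simp: hadamard_def outer_prod_def divided_diff_mat_def field_simps)

lemma hadamard_divided_diff_commutator_diag:
  fixes f f' :: "real \<Rightarrow> real" and lam :: "nat \<Rightarrow> real"
  assumes c: "c \<in> carrier_vec m"
  defines "H \<equiv> hadamard (outer_prod c c) (divided_diff_mat m f f' lam)"
    and "w \<equiv> vec m (\<lambda>i. c $ i * f (lam i))"
  shows "H * mat_diag m lam - mat_diag m lam * H = outer_prod c w - outer_prod w c"
proof -
  have H: "H \<in> carrier_mat m m"
    using c by (simp add: H_def)
  show ?thesis
  proof (rule eq_matI)
    fix i j
    assume "i < dim_row (outer_prod c w - outer_prod w c)" "j < dim_col (outer_prod c w - outer_prod w c)"
    then have ij: "i < m" "j < m"
      using c by (auto simp: outer_prod_def w_def)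
    have "(lam j - lam i) * H $$ (i, j) = c $ i * c $ j * (f (lam j) - f (lam i))"
      using ij c by (cases "lam i = lam j") (auto simp: H_def hadamard_def outer_prod_def divided_diff_mat_def field_simps)
    then show "(H * mat_diag m lam - mat_diag m lam * H) $$ (i, j) = (outer_prod c w - outer_prod w c) $$ (i, j)"
      using ij c by (simp add: mat_diag_mult_left[OF H] mat_diag_mult_right[OF H] outer_prod_def w_def algebra_simps)
  qed (use c H in \<open>auto simp: outer_prod_def w_def mat_diag_def\<close>)
qed

lemma conjugate_hadamard_divided_diff_commutator:
  fixes Q :: "real mat" and f f' :: "real \<Rightarrow> real" and lam :: "nat \<Rightarrow> real"
  assumes Q: "Q \<in> carrier_mat m m" and orth: "transpose_mat Q * Q = 1\<^sub>m m" and c: "c \<in> carrier_vec m"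
  defines "H \<equiv> hadamard (outer_prod c c) (divided_diff_mat m f f' lam)"
    and "w \<equiv> vec m (\<lambda>i. c $ i * f (lam i))"
  shows "(Q * H * transpose_mat Q) * (Q * mat_diag m lam * transpose_mat Q)
      - (Q * mat_diag m lam * transpose_mat Q) * (Q * H * transpose_mat Q)
    = outer_prod (Q *\<^sub>v c) (Q *\<^sub>v w) - outer_prod (Q *\<^sub>v w) (Q *\<^sub>v c)"
proof -
  have H: "H \<in> carrier_mat m m"
    using c by (simp add: H_def)
  have "H * mat_diag m lam - mat_diag m lam * H = outer_prod c w - outer_prod w c"
    using c by (simp add: H_def w_def hadamard_divided_diff_commutator_diag)
  then show ?thesis
    using conjugate_outer_prod_diff[OF Q c] commutator_conjugate[OF Q orth H mat_diag_dim]
    by (simp add: w_def)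
qed

theorem lemma2:
  fixes m n :: nat and T Q S :: "real mat" and lam :: "nat \<Rightarrow> real"
    and f f' :: "real \<Rightarrow> real" and a b :: real and u :: "real vec"
  assumes m_pos: "0 < m"
    and T_carr: "T \<in> carrier_mat m m" and T_sym: "transpose_mat T = T"
    and Q_carr: "Q \<in> carrier_mat m m"
    and Q_orth1: "transpose_mat Q * Q = 1\<^sub>m m" and Q_orth2: "Q * transpose_mat Q = 1\<^sub>m m"
    and T_eig: "T = Q * mat_diag m lam * transpose_mat Q"
    and lam_in: "\<forall>i<m. lam i \<in> {a<..<b}"
    and f_deriv: "\<forall>x\<in>{a<..<b}. (f has_real_derivative f' x) (at x)"
    and f'_cont: "continuous_on {a<..<b} f'"
    and u_carr: "u \<in> carrier_vec n" and u_nz: "u \<noteq> 0\<^sub>v n"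
    and S_carr: "S \<in> carrier_mat m m" and S_skew: "transpose_mat S = - S"
    and S_e1: "S *\<^sub>v unit_vec m 0 = 0\<^sub>v m"
  defines "G \<equiv> (u \<bullet> u) \<cdot>\<^sub>m (Q * hadamard (outer_prod (transpose_mat Q *\<^sub>v unit_vec m 0) (transpose_mat Q *\<^sub>v unit_vec m 0)) (divided_diff_mat m f f' lam) * transpose_mat Q)"
  shows "mat_trace (transpose_mat G * (T * S - S * T)) = 0"
proof -
  define e :: "real vec" where "e = unit_vec m 0"
  define c where "c = transpose_mat Q *\<^sub>v e"
  define v where "v = Q *\<^sub>v vec m (\<lambda>i. c $ i * f (lam i))"
  define H where "H = hadamard (outer_prod c c) (divided_diff_mat m f f' lam)"
  define G\<^sub>0 where "G\<^sub>0 = Q * H * transpose_mat Q"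
  have e: "e \<in> carrier_vec m" and c: "c \<in> carrier_vec m" and v: "v \<in> carrier_vec m"
    using Q_carr by (simp_all add: e_def c_def v_def)
  have H: "H \<in> carrier_mat m m"
    using c by (simp add: H_def)
  have G\<^sub>0: "G\<^sub>0 \<in> carrier_mat m m"
    using Q_carr H by (simp add: G\<^sub>0_def)
  have Qc: "Q *\<^sub>v c = e"
    using Q_carr e by (simp add: c_def assoc_mult_mat_vec[symmetric, of _ m m _ m] Q_orth2)
  have G: "G = (u \<bullet> u) \<cdot>\<^sub>m G\<^sub>0"
    by (simp add: G_def G\<^sub>0_def H_def c_def e_def)
  have "transpose_mat G = G"
    using transpose_hadamard_divided_diff[OF c, of f f' lam, folded H_def]
    by (simp add: G G\<^sub>0_def transpose_smult_mat transpose_conjugate[OF Q_carr H])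
  have commutator: "G\<^sub>0 * T - T * G\<^sub>0 = outer_prod e v - outer_prod v e"
    using conjugate_hadamard_divided_diff_commutator[OF Q_carr Q_orth1 c, of f f' lam, folded H_def]
    by (simp add: G\<^sub>0_def T_eig v_def Qc)
  have TS: "T * S - S * T \<in> carrier_mat m m"
    using T_carr S_carr by auto
  have "mat_trace (transpose_mat G * (T * S - S * T)) = mat_trace ((u \<bullet> u) \<cdot>\<^sub>m (G\<^sub>0 * (T * S - S * T)))"
    using \<open>transpose_mat G = G\<close> by (simp add: G mult_smult_assoc_mat[OF G\<^sub>0 TS])
  also have "\<dots> = (u \<bullet> u) * mat_trace ((G\<^sub>0 * T - T * G\<^sub>0) * S)"
    using G\<^sub>0 TS T_carr S_carr by (simp add: mat_trace_smult[of _ m] mat_trace_mult_commutator[of _ m])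
  also have "\<dots> = 0"
    using mat_trace_outer_prod_diff_skew[OF e v S_carr S_skew] S_e1 by (simp add: commutator e_def)
  finally show ?thesis .
qed

end
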